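(* Fix $\epsilon=\phi\in\mathbb R$ with $|\epsilon|>1$. Then: 1. For each $n$ there exist two distinct eigenvalues $\mu_n,\nu_n$ of $T_{n,\epsilon,\phi}$ with $\mu_n,\nu_n\to\epsilon+\epsilon^{-1}$ as $n\to\infty$, and eventually $\mu_n,\nu_n$ are the only two outliers of $T_{n,\epsilon,\phi}$ (in particular there are exactly two eigenvalues converging to $\epsilon+\epsilon^{-1}$). 2. Let $\mathbf x_n,\mathbf y_n$ be eigenvectors of $T_{n,\epsilon,\phi}$ associated with $\mu_n,\nu_n$ respectively, with $\|\mathbf x_n\|_2=\|\mathbf y_n\|_2=1$. Then, up to renaming $\mu_n$ and $\nu_n$, eventually $E_n\mathbf x_n=\mathbf x_n$ and $E_n\mathbf y_n=-\mathbf y_n$. Moreover $\|\mathbf x_n-P_{\mathbf v_n+\mathbf w_n}\mathbf x_n\|_2\to0$ and $\|\mathbf y_n-P_{\mathbf v_n-\mathbf w_n}\mathbf y_n\|_2\to0$ as $n\to\infty$, where $\mathbf v_n=[1,\epsilon^{-1},\ldots,\epsilon^{-n+1}]^\top$ and $\mathbf w_n=E_n\mathbf v_n=[\epsilon^{-n+1},\ldots,\epsilon^{-1},1]^\top$.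
   Context: For $n\ge2$ and real parameters $\epsilon,\phi$, $T_{n,\epsilon,\phi}$ is the real symmetric tridiagonal $n\times n$ matrix with diagonal entries $(\epsilon,0,\ldots,0,\phi)$ and all sub- and super-diagonal entries equal to $1$. An outlier is an eigenvalue not in $[-2,2]$. $E_n$ is the $n\times n$ flip matrix ($(E_n)_{ij}=1$ iff $i+j=n+1$, else $0$). For $\mathbf u\in\mathbb R^n\setminus\{0\}$, $P_{\mathbf u}\mathbf x=\frac{\mathbf x^\top\mathbf u}{\mathbf u^\top\mathbf u}\mathbf u$ is the orthogonal projector onto $\mathrm{span}\{\mathbf u\}$. *)

theory Defs
  imports Complex_Main
begin

text \<open>Vectors in R^n are represented as functions nat => real, using indices 0..n-1
  (index i here corresponds to index i+1 in the paper); n x n matrices as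
  nat => nat => real with the same index convention.\<close>

definition T :: "nat \<Rightarrow> real \<Rightarrow> real \<Rightarrow> nat \<Rightarrow> nat \<Rightarrow> real" where
  "T n \<epsilon> \<phi> i j =
     (if i = j then (if i = 0 then \<epsilon> else if i = n - 1 then \<phi> else 0)
      else if i + 1 = j \<or> j + 1 = i then 1 else 0)"

definition mat_vec :: "nat \<Rightarrow> (nat \<Rightarrow> nat \<Rightarrow> real) \<Rightarrow> (nat \<Rightarrow> real) \<Rightarrow> nat \<Rightarrow> real" where
  "mat_vec n A x i = (\<Sum>j<n. A i j * x j)"

definition is_eigvec :: "nat \<Rightarrow> (nat \<Rightarrow> nat \<Rightarrow> real) \<Rightarrow> real \<Rightarrow> (nat \<Rightarrow> real) \<Rightarrow> bool" where
  "is_eigvec n A c x \<longleftrightarrow> (\<exists>i<n. x i \<noteq> 0) \<and> (\<forall>i<n. mat_vec n A x i = c * x i)"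

definition is_eigval :: "nat \<Rightarrow> (nat \<Rightarrow> nat \<Rightarrow> real) \<Rightarrow> real \<Rightarrow> bool" where
  "is_eigval n A c \<longleftrightarrow> (\<exists>x. is_eigvec n A c x)"

definition outliers :: "nat \<Rightarrow> (nat \<Rightarrow> nat \<Rightarrow> real) \<Rightarrow> real set" where
  "outliers n A = {c. is_eigval n A c \<and> c \<notin> {-2..2}}"

definition flip :: "nat \<Rightarrow> (nat \<Rightarrow> real) \<Rightarrow> nat \<Rightarrow> real" where
  "flip n x i = x (n - 1 - i)"

definition vnorm :: "nat \<Rightarrow> (nat \<Rightarrow> real) \<Rightarrow> real" where
  "vnorm n x = sqrt (\<Sum>i<n. (x i)\<^sup>2)"

definition proj :: "nat \<Rightarrow> (nat \<Rightarrow> real) \<Rightarrow> (nat \<Rightarrow> real) \<Rightarrow> nat \<Rightarrow> real" where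
  "proj n u x i = (\<Sum>j<n. x j * u j) / (\<Sum>j<n. u j * u j) * u i"

definition vdiff :: "nat \<Rightarrow> (nat \<Rightarrow> real) \<Rightarrow> (nat \<Rightarrow> real) \<Rightarrow> nat \<Rightarrow> real" where
  "vdiff n x y i = x i - y i"

definition vv :: "real \<Rightarrow> nat \<Rightarrow> nat \<Rightarrow> real" where
  "vv \<epsilon> n i = (1 / \<epsilon>) ^ i"

definition ww :: "real \<Rightarrow> nat \<Rightarrow> nat \<Rightarrow> real" where
  "ww \<epsilon> n = flip n (vv \<epsilon> n)"

end

theory Submission
  imports Defs
begin

text \<open>
  Write an outlier as \<open>l = t + 1/t\<close> with \<open>0 < \<bar>t\<bar> < 1\<close>. Solving the eigenvalue equation row
  by row leaves a single scalar condition, which under this substitution factors into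
  \<open>F\<^sub>\<sigma>(t) = 1 - \<epsilon> t - \<sigma> (\<epsilon> - t) t\<^sup>n\<close> for \<open>\<sigma> = 1\<close> and \<open>\<sigma> = -1\<close>; a root of \<open>F\<^sub>\<sigma>\<close> yields the eigenvector
  with entries \<open>t^i + \<sigma> t^(n - 1 - i)\<close>, which the flip maps to \<open>\<sigma>\<close> times itself.
  For large \<open>n\<close> the term \<open>(\<epsilon> - t) t\<^sup>n\<close> is negligible away from \<open>\<bar>t\<bar> = 1\<close>, so each \<open>F\<^sub>\<sigma>\<close>
  has exactly one root in \<open>0 < \<bar>t\<bar> < 1\<close>, and it tends to \<open>1/\<epsilon>\<close>: existence by the
  intermediate value theorem, uniqueness by a contraction estimate, and roots near \<open>\<bar>t\<bar> = 1\<close>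
  are excluded by a geometric-sum bound. So eventually the outliers are exactly the two values
  \<open>t\<^sub>\<sigma> + 1/t\<^sub>\<sigma> \<rightarrow> \<epsilon> + 1/\<epsilon>\<close>, and their unit eigenvectors approach the lines spanned by the
  vectors built from \<open>t = 1/\<epsilon>\<close>, namely \<open>v\<^sub>n \<plusminus> w\<^sub>n\<close>.
\<close>


section \<open>Eigenvalues of the tridiagonal matrix via a three-term recurrence\<close>

text \<open>The first \<open>n - 1\<close> rows of \<open>(T - l I) x = 0\<close> force \<open>x\<^sub>i = x\<^sub>0 \<cdot> ev_seq e l i\<close>; the last row
  then holds iff \<open>ev_residual n e l = 0\<close>.\<close>

fun ev_seq :: "real \<Rightarrow> real \<Rightarrow> nat \<Rightarrow> real" where
  "ev_seq e l 0 = 1"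
| "ev_seq e l (Suc 0) = l - e"
| "ev_seq e l (Suc (Suc i)) = l * ev_seq e l (Suc i) - ev_seq e l i"

definition ev_residual :: "nat \<Rightarrow> real \<Rightarrow> real \<Rightarrow> real" where
  "ev_residual n e l = ev_seq e l n - e * ev_seq e l (n - 1)"

lemma mat_vec_T:
  assumes "n \<ge> 2" "i < n"
  shows "mat_vec n (T n e e) x i =
     (if i = 0 then e * x 0 else x (i - 1)) + (if i = n - 1 then e * x i else x (i + 1))"
proof -
  have entry: "T n e e i j * x j = (if j = i then (if i = 0 \<or> i = n - 1 then e else 0) * x i else 0)
      + (if j = Suc i then x (Suc i) else 0) + (if j = i - 1 \<and> i > 0 then x (i - 1) else 0)" for j
    unfolding T_def by auto
  have "mat_vec n (T n e e) x i = (\<Sum>j<n. if j = i then (if i = 0 \<or> i = n - 1 then e else 0) * x i else 0)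
      + (\<Sum>j<n. if j = Suc i then x (Suc i) else 0) + (\<Sum>j<n. if j = i - 1 \<and> i > 0 then x (i - 1) else 0)"
    unfolding mat_vec_def entry sum.distrib by simp
  also have "\<dots> = (if i = 0 \<or> i = n - 1 then e else 0) * x i + (if Suc i < n then x (Suc i) else 0)
      + (if i > 0 then x (i - 1) else 0)"
    using assms by (auto simp add: sum.delta' cong: if_cong)
  moreover have "i \<noteq> n - 1 \<Longrightarrow> Suc i < n" using assms by auto
  ultimately show ?thesis using assms by (cases "i = 0"; cases "i = n - 1"; simp)
qed

lemma ev_seq_is_eigvec:
  assumes "n \<ge> 2" "ev_residual n e l = 0"
  shows "is_eigvec n (T n e e) l (ev_seq e l)"
  unfolding is_eigvec_def
proof (intro conjI allI impI)
  show "\<exists>i<n. ev_seq e l i \<noteq> 0" using assms by (intro exI[of _ 0]) auto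
  fix i assume i: "i < n"
  show "mat_vec n (T n e e) (ev_seq e l) i = l * ev_seq e l i"
  proof (cases "i = 0")
    case False
    then obtain k where k: "i = Suc k" by (cases i) auto
    show ?thesis
    proof (cases "i = n - 1")
      case True
      then have "n = Suc (Suc k)" using k assms by simp
      then show ?thesis using assms k True by (simp add: mat_vec_T ev_residual_def algebra_simps)
    next
      case False
      then show ?thesis using assms k i by (simp add: mat_vec_T algebra_simps)
    qed
  qed (use assms in \<open>simp add: mat_vec_T\<close>)
qed

lemma eigvec_eq_ev_seq:
  assumes n: "n \<ge> 2" and ev: "is_eigvec n (T n e e) l x"
  shows "\<forall>i<n. x i = x 0 * ev_seq e l i" and "x 0 \<noteq> 0" and "ev_residual n e l = 0"
proof -
  have rows: "(if i = 0 then e * x 0 else x (i - 1)) + (if i = n - 1 then e * x i else x (i + 1)) = l * x i"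
    if "i < n" for i
    using ev n that by (simp add: is_eigvec_def mat_vec_T)
  have first: "x i = x 0 * ev_seq e l i" if "i < n" for i
    using that
  proof (induction i rule: induct_nat_012)
    case 1
    show ?case using rows[of 0] n by (simp add: algebra_simps)
  next
    case (ge2 i)
    have "Suc i \<noteq> n - 1" using ge2.prems by simp
    then have "x i + x (Suc (Suc i)) = l * x (Suc i)" using rows[of "Suc i"] ge2.prems by simp
    then show ?case using ge2 by (simp add: algebra_simps)
  qed simp
  then show all: "\<forall>i<n. x i = x 0 * ev_seq e l i" by blast
  show x0: "x 0 \<noteq> 0"
  proof
    assume "x 0 = 0"
    then show False using ev all by (auto simp: is_eigvec_def)
  qed
  obtain m where m: "n = Suc (Suc m)" using n by (metis add_2_eq_Suc le_Suc_ex)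
  have "x m + e * x (Suc m) = l * x (Suc m)" using rows[of "Suc m"] m by simp
  then have "x 0 * (ev_seq e l m + e * ev_seq e l (Suc m) - l * ev_seq e l (Suc m)) = 0"
    using first[of m] first[of "Suc m"] m by (simp add: algebra_simps)
  then have "ev_seq e l m + e * ev_seq e l (Suc m) - l * ev_seq e l (Suc m) = 0" using x0 by simp
  then show "ev_residual n e l = 0" using m by (simp add: ev_residual_def algebra_simps)
qed

lemma is_eigval_T_iff: "n \<ge> 2 \<Longrightarrow> is_eigval n (T n e e) l \<longleftrightarrow> ev_residual n e l = 0"
  using ev_seq_is_eigvec eigvec_eq_ev_seq(3) unfolding is_eigval_def by blast

section \<open>The substitution \<open>l = t + 1/t\<close>\<close>

definition sym_factor :: "nat \<Rightarrow> real \<Rightarrow> real \<Rightarrow> real \<Rightarrow> real" where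
  "sym_factor n e \<sigma> t = 1 - e * t - \<sigma> * (e - t) * t ^ n"

lemma ev_seq_joukowski:
  assumes t: "t \<noteq> 0"
  shows "ev_seq e (t + 1/t) i * (1 - t\<^sup>2) * t ^ i = (1 - e * t) + t * (e - t) * t ^ (2 * i)"
proof (induction i rule: induct_nat_012)
  case 1
  have "(t + 1/t - e) * (1 - t\<^sup>2) * t = (t\<^sup>2 + 1 - e * t) * (1 - t\<^sup>2)"
    using t by (simp add: field_simps power2_eq_square)
  then show ?case by (simp add: algebra_simps power2_eq_square)
next
  case (ge2 i)
  define l where "l = t + 1/t"
  have lt: "l * t ^ Suc (Suc i) = (t\<^sup>2 + 1) * t ^ Suc i"
    using t unfolding l_def by (simp add: field_simps power2_eq_square)
  have "ev_seq e l (Suc (Suc i)) * (1 - t\<^sup>2) * t ^ Suc (Suc i)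
      = ev_seq e l (Suc i) * (1 - t\<^sup>2) * (l * t ^ Suc (Suc i)) - ev_seq e l i * (1 - t\<^sup>2) * (t\<^sup>2 * t ^ i)"
    by (simp add: algebra_simps power2_eq_square)
  also have "\<dots> = (t\<^sup>2 + 1) * (ev_seq e l (Suc i) * (1 - t\<^sup>2) * t ^ Suc i) - t\<^sup>2 * (ev_seq e l i * (1 - t\<^sup>2) * t ^ i)"
    unfolding lt by (simp add: algebra_simps)
  also have "\<dots> = (t\<^sup>2 + 1) * ((1 - e * t) + t * (e - t) * t ^ (2 * Suc i))
      - t\<^sup>2 * ((1 - e * t) + t * (e - t) * t ^ (2 * i))"
    using ge2 unfolding l_def by (simp only:)
  also have "\<dots> = (1 - e * t) + t * (e - t) * t ^ (2 * Suc (Suc i))"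
    by (simp add: algebra_simps power2_eq_square)
  finally show ?case unfolding l_def .
qed (simp add: algebra_simps power2_eq_square)

lemma ev_residual_joukowski:
  assumes "t \<noteq> 0" "n \<ge> 1"
  shows "ev_residual n e (t + 1/t) * ((1 - t\<^sup>2) * t ^ n) = sym_factor n e 1 t * sym_factor n e (-1) t"
proof -
  obtain m where m: "n = Suc m" using assms(2) by (cases n) auto
  have "ev_residual n e (t + 1/t) * ((1 - t\<^sup>2) * t ^ n)
      = ev_seq e (t + 1/t) (Suc m) * (1 - t\<^sup>2) * t ^ Suc m - e * t * (ev_seq e (t + 1/t) m * (1 - t\<^sup>2) * t ^ m)"
    unfolding ev_residual_def m by (simp add: algebra_simps)
  also have "\<dots> = sym_factor n e 1 t * sym_factor n e (-1) t"
    unfolding ev_seq_joukowski[OF assms(1)] sym_factor_def m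
    by (simp add: algebra_simps power2_eq_square power_add power_mult)
  finally show ?thesis .
qed

lemma ev_residual_eq_0_if_sym_root:
  assumes "n \<ge> 1" "\<bar>\<sigma>\<bar> = 1" "0 < \<bar>t\<bar>" "\<bar>t\<bar> < 1" "sym_factor n e \<sigma> t = 0"
  shows "ev_residual n e (t + 1/t) = 0"
proof -
  have "t\<^sup>2 < 1" using assms(4) by (simp add: abs_square_less_1)
  then have "(1 - t\<^sup>2) * t ^ n \<noteq> 0" using assms(3) by simp
  moreover have "\<sigma> = 1 \<or> \<sigma> = -1" using assms(2) by auto
  ultimately show ?thesis using ev_residual_joukowski[of t n e] assms by auto
qed

lemma ev_seq_at_sym_root:
  assumes t: "t \<noteq> 0" "t\<^sup>2 \<noteq> 1" and root: "sym_factor n e \<sigma> t = 0" and i: "i < n"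
  shows "ev_seq e (t + 1/t) i = t * (e - t) / (1 - t\<^sup>2) * (t ^ i + \<sigma> * t ^ (n - 1 - i))"
proof -
  have tn: "t ^ n = t * t ^ i * t ^ (n - 1 - i)"
    using i by (simp flip: power_add power_Suc)
  have "ev_seq e (t + 1/t) i * ((1 - t\<^sup>2) * t ^ i) = \<sigma> * (e - t) * t ^ n + t * (e - t) * t ^ (2 * i)"
    using ev_seq_joukowski[OF t(1), of e i] root unfolding sym_factor_def by (simp add: algebra_simps)
  also have "\<dots> = t * (e - t) * (t ^ i + \<sigma> * t ^ (n - 1 - i)) * t ^ i"
    unfolding tn by (simp add: algebra_simps power_mult power2_eq_square)
  also have "\<dots> = t * (e - t) / (1 - t\<^sup>2) * (t ^ i + \<sigma> * t ^ (n - 1 - i)) * ((1 - t\<^sup>2) * t ^ i)"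
    using t by (simp add: field_simps)
  finally have "ev_seq e (t + 1/t) i * ((1 - t\<^sup>2) * t ^ i)
      = t * (e - t) / (1 - t\<^sup>2) * (t ^ i + \<sigma> * t ^ (n - 1 - i)) * ((1 - t\<^sup>2) * t ^ i)" .
  moreover have "(1 - t\<^sup>2) * t ^ i \<noteq> 0" using t by simp
  ultimately show ?thesis using mult_right_cancel by blast
qed

lemma ev_seq_cos:
  "ev_seq e (2 * cos \<theta>) i * sin \<theta> = sin ((real i + 1) * \<theta>) - e * sin (real i * \<theta>)"
proof (induction i rule: induct_nat_012)
  case 1
  have "sin (2 * \<theta>) = 2 * sin \<theta> * cos \<theta>" by (rule sin_double)
  then show ?case by (simp add: algebra_simps)
next
  case (ge2 i)
  have step: "sin (a + \<theta>) = 2 * cos \<theta> * sin a - sin (a - \<theta>)" for a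
    by (simp add: sin_add sin_diff)
  have step1: "sin ((real (Suc (Suc i)) + 1) * \<theta>) = 2 * cos \<theta> * sin ((real (Suc i) + 1) * \<theta>) - sin ((real i + 1) * \<theta>)"
    using step[of "(real (Suc i) + 1) * \<theta>"] by (simp add: algebra_simps)
  have step2: "sin (real (Suc (Suc i)) * \<theta>) = 2 * cos \<theta> * sin (real (Suc i) * \<theta>) - sin (real i * \<theta>)"
    using step[of "real (Suc i) * \<theta>"] by (simp add: algebra_simps)
  have "ev_seq e (2 * cos \<theta>) (Suc (Suc i)) * sin \<theta>
      = 2 * cos \<theta> * (ev_seq e (2 * cos \<theta>) (Suc i) * sin \<theta>) - ev_seq e (2 * cos \<theta>) i * sin \<theta>"
    by (simp add: algebra_simps)
  also have "\<dots> = 2 * cos \<theta> * (sin ((real (Suc i) + 1) * \<theta>) - e * sin (real (Suc i) * \<theta>))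
      - (sin ((real i + 1) * \<theta>) - e * sin (real i * \<theta>))"
    using ge2 by (simp only:)
  also have "\<dots> = sin ((real (Suc (Suc i)) + 1) * \<theta>) - e * sin (real (Suc (Suc i)) * \<theta>)"
    unfolding step1 step2 by (simp add: algebra_simps)
  finally show ?case .
qed simp

lemma ev_seq_neg: "ev_seq (-e) (-l) i = (-1) ^ i * ev_seq e l i"
  by (induction i rule: induct_nat_012) (auto simp: algebra_simps)

lemma ev_residual_neg: "n \<ge> 1 \<Longrightarrow> ev_residual n (-e) (-l) = (-1) ^ n * ev_residual n e l"
  by (cases n) (auto simp: ev_residual_def ev_seq_neg algebra_simps)

lemma continuous_on_ev_residual: "continuous_on A (\<lambda>l. ev_residual n e l)"
proof -
  have "continuous_on A (\<lambda>l. ev_seq e l i)" for i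
    by (induction i rule: induct_nat_012) (auto intro!: continuous_intros)
  then show ?thesis unfolding ev_residual_def by (intro continuous_intros)
qed

lemma abs_add_inverse_gt_2:
  fixes t :: real
  assumes "0 < \<bar>t\<bar>" "\<bar>t\<bar> < 1"
  shows "\<bar>t + 1/t\<bar> > 2"
proof -
  have "t + 1/t = (t\<^sup>2 + 1) / t" using assms by (simp add: field_simps power2_eq_square)
  then have eq: "\<bar>t + 1/t\<bar> = (\<bar>t\<bar>\<^sup>2 + 1) / \<bar>t\<bar>" by (simp add: abs_divide)
  have "(\<bar>t\<bar> - 1)\<^sup>2 > 0" using assms by simp
  then have "\<bar>t\<bar>\<^sup>2 + 1 > 2 * \<bar>t\<bar>" by (simp add: power2_diff)
  then show ?thesis unfolding eq using assms by (simp add: less_divide_eq)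
qed

lemma add_inverse_strict_antimono:
  fixes s t :: real
  assumes "0 < t" "t < s" "s \<le> 1"
  shows "s + 1/s < t + 1/t"
proof -
  have "t * s < s" using assms mult_strict_right_mono[of t 1 s] by simp
  then have "t * s < 1" using assms by linarith
  then have "(s - t) * (1 - t * s) / (t * s) > 0" using assms by simp
  moreover have "(t + 1/t) - (s + 1/s) = (s - t) * (1 - t * s) / (t * s)"
    using assms by (simp add: field_simps)
  ultimately show ?thesis by simp
qed

lemma add_inverse_inj:
  fixes t u :: real
  assumes "0 < \<bar>t\<bar>" "\<bar>t\<bar> < 1" "0 < \<bar>u\<bar>" "\<bar>u\<bar> < 1" "t + 1/t = u + 1/u"
  shows "t = u"
proof -
  have "\<bar>t * u\<bar> < 1" using assms mult_strict_mono[of "\<bar>t\<bar>" 1 "\<bar>u\<bar>" 1] by (simp add: abs_mult)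
  then have "t * u - 1 \<noteq> 0" by auto
  moreover have "(t - u) * (t * u - 1) = t * u * ((t + 1/t) - (u + 1/u))"
    using assms by (simp add: field_simps)
  ultimately show ?thesis using assms(5) by simp
qed

lemma abs_gt_2_eq_add_inverse:
  fixes c :: real
  assumes "\<bar>c\<bar> > 2"
  obtains t where "0 < \<bar>t\<bar>" "\<bar>t\<bar> < 1" "c = t + 1/t"
proof -
  have pos: "\<exists>t. 0 < \<bar>t\<bar> \<and> \<bar>t\<bar> < 1 \<and> c = t + 1/t" if c: "c > 2" for c :: real
  proof -
    define q where "q = sqrt (c\<^sup>2 - 4)"
    have "c\<^sup>2 > 4" using c mult_strict_mono[of 2 c 2 c] by (simp add: power2_eq_square)
    then have q: "q\<^sup>2 = c\<^sup>2 - 4" "0 < q" unfolding q_def by simp_all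
    have "q\<^sup>2 < c\<^sup>2" "(c - 2)\<^sup>2 < q\<^sup>2" using q c by (simp_all add: power2_eq_square algebra_simps)
    then have "q < c" "c - 2 < q"
      using power_less_imp_less_base[of q 2 c] power_less_imp_less_base[of "c - 2" 2 q] q c by auto
    moreover have "c = (c - q) / 2 + 1 / ((c - q) / 2)"
    proof -
      have "(c - q) * (c + q) = 4" using q by (simp add: algebra_simps power2_eq_square)
      then have "1 / ((c - q) / 2) = (c + q) / 2" using \<open>q < c\<close> by (simp add: field_simps)
      then show ?thesis by (simp only:) (simp add: field_simps)
    qed
    ultimately show ?thesis by (intro exI[of _ "(c - q) / 2"]) auto
  qed
  show ?thesis
  proof (cases "c > 0")
    case True
    then show ?thesis using pos[of c] assms that by auto
  next
    case False
    then obtain t where "0 < \<bar>t\<bar>" "\<bar>t\<bar> < 1" "-c = t + 1/t" using pos[of "-c"] assms by auto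
    then show ?thesis using that[of "-t"] by (simp add: algebra_simps)
  qed
qed

lemma ev_residual_cos_pi_div:
  assumes "n \<ge> 2"
  shows "ev_residual n e (2 * cos (pi / n)) = e\<^sup>2 - 1"
proof -
  define \<theta> where "\<theta> = pi / n"
  have "0 < \<theta>" "\<theta> < pi" "real n * \<theta> = pi" using assms unfolding \<theta>_def by (auto simp: field_simps)
  then have "sin \<theta> > 0" by (simp add: sin_gt_zero)
  have "ev_seq e (2 * cos \<theta>) n * sin \<theta> = - sin \<theta>"
    using ev_seq_cos[of e \<theta> n] \<open>real n * \<theta> = pi\<close> by (simp add: distrib_right sin_add)
  moreover have "ev_seq e (2 * cos \<theta>) (n - 1) * sin \<theta> = - (e * sin \<theta>)"
    using ev_seq_cos[of e \<theta> "n - 1"] \<open>real n * \<theta> = pi\<close> assms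
    by (simp add: of_nat_diff left_diff_distrib sin_diff)
  ultimately have "ev_residual n e (2 * cos \<theta>) * sin \<theta> = (e\<^sup>2 - 1) * sin \<theta>"
    unfolding ev_residual_def by (simp add: algebra_simps power2_eq_square)
  then show ?thesis using \<open>sin \<theta> > 0\<close> unfolding \<theta>_def by simp
qed

lemma sym_factor_at_inverse: "e \<noteq> 0 \<Longrightarrow> sym_factor n e \<sigma> (1/e) = - \<sigma> * (e - 1/e) * (1/e) ^ n"
  by (simp add: sym_factor_def)

lemma inverse_less_self: "(e::real) > 1 \<Longrightarrow> 1/e < e"
  using less_1_mult[of e e] by (simp add: field_simps)

lemma ev_residual_add_inverse_neg:
  assumes "e > 1" "n \<ge> 1"
  shows "ev_residual n e (e + 1/e) < 0"
proof -
  define t where "t = 1/e"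
  have "0 < t" "t < 1" "t < e" using assms inverse_less_self[of e] unfolding t_def by auto
  have "ev_residual n e (t + 1/t) * ((1 - t\<^sup>2) * t ^ n) = sym_factor n e 1 t * sym_factor n e (-1) t"
    using ev_residual_joukowski \<open>0 < t\<close> assms by simp
  also have "\<dots> = - ((e - t) * t ^ n)\<^sup>2"
    using assms unfolding t_def by (simp add: sym_factor_at_inverse power2_eq_square algebra_simps)
  also have "\<dots> < 0" using \<open>0 < t\<close> \<open>t < e\<close> by simp
  finally have "ev_residual n e (t + 1/t) * ((1 - t\<^sup>2) * t ^ n) < 0" .
  moreover have "(1 - t\<^sup>2) * t ^ n > 0" using \<open>0 < t\<close> \<open>t < 1\<close> by (simp add: power_less_one_iff)
  moreover have "t + 1/t = e + 1/e" unfolding t_def by simp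
  ultimately show ?thesis by (metis mult_nonneg_nonneg not_le order.strict_implies_order)
qed

text \<open>For small \<open>n\<close> the factor with \<open>\<sigma> = -1\<close> may have no root in \<open>(0, 1)\<close>, so one eigenvalue
  comes instead from a sign change of the residual between \<open>2 cos (\<pi>/n)\<close> and \<open>e + 1/e\<close>.\<close>

lemma ev_residual_two_roots:
  assumes e: "e > 1" and n: "n \<ge> 2"
  obtains l1 l2 where "l1 < e + 1/e" "e + 1/e < l2" "ev_residual n e l1 = 0" "ev_residual n e l2 = 0"
proof -
  have neg: "ev_residual n e (e + 1/e) < 0" using ev_residual_add_inverse_neg e n by simp
  have "2 * cos (pi / n) \<le> 2" by simp
  also have "2 < e + 1/e" using abs_add_inverse_gt_2[of "1/e"] e by simp
  finally obtain l1 where l1: "l1 \<le> e + 1/e" "ev_residual n e l1 = 0"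
    using IVT2'[of "ev_residual n e" "e + 1/e" 0 "2 * cos (pi / n)", OF _ _ _ continuous_on_ev_residual]
      ev_residual_cos_pi_div[OF n, of e] neg e by (auto simp: abs_square_less_1)
  have "sym_factor n e 1 (1/e) < 0"
    using e inverse_less_self[of e] by (simp add: sym_factor_at_inverse mult_neg_pos)
  moreover have "sym_factor n e 1 0 = 1" using n by (simp add: sym_factor_def)
  moreover have "continuous_on {0..1/e} (sym_factor n e 1)" unfolding sym_factor_def by (intro continuous_intros)
  ultimately obtain t where t: "0 \<le> t" "t \<le> 1/e" "sym_factor n e 1 t = 0"
    using IVT2'[of "sym_factor n e 1" "1/e" 0 0] e by auto
  then have "0 < t" "t < 1/e" using \<open>sym_factor n e 1 0 = 1\<close> \<open>sym_factor n e 1 (1/e) < 0\<close>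
    by (auto simp: order.order_iff_strict)
  moreover have "1/e < 1" using e by simp
  ultimately have "ev_residual n e (t + 1/t) = 0" "e + 1/e < t + 1/t"
    using ev_residual_eq_0_if_sym_root[of n 1 t e] add_inverse_strict_antimono[of t "1/e"] t n
    by (auto simp: add.commute)
  moreover have "l1 < e + 1/e" using l1 neg by (cases "l1 = e + 1/e") auto
  ultimately show ?thesis using that l1 by blast
qed

lemma two_eigvals:
  assumes e: "\<bar>e\<bar> > 1" and n: "n \<ge> 2"
  shows "\<exists>l1 l2. l1 \<noteq> l2 \<and> is_eigval n (T n e e) l1 \<and> is_eigval n (T n e e) l2"
proof (cases "e > 0")
  case True
  then obtain l1 l2 where "l1 < e + 1/e" "e + 1/e < l2" "ev_residual n e l1 = 0" "ev_residual n e l2 = 0"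
    using ev_residual_two_roots[of e n] e n by auto
  then show ?thesis using is_eigval_T_iff[OF n] by (metis less_irrefl order.strict_trans)
next
  case False
  then obtain l1 l2 where "l1 < -e + 1/(-e)" "-e + 1/(-e) < l2"
      "ev_residual n (-e) l1 = 0" "ev_residual n (-e) l2 = 0"
    using ev_residual_two_roots[of "-e" n] e n by auto
  moreover have "ev_residual n e (-l) = (-1) ^ n * ev_residual n (-e) l" for l
    using ev_residual_neg[of n "-e" l] n by simp
  ultimately show ?thesis using is_eigval_T_iff[OF n]
    by (metis less_irrefl minus_equation_iff mult_zero_right order.strict_trans)
qed

section \<open>Localising the roots of the factors\<close>

lemma power_mul_lt_of_geometric_sum:
  fixes e t :: real
  assumes "e > 1" "0 < t" "t < 1" "(e - 1) * ((\<Sum>k<n. t ^ k) - 1) > 2"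
  shows "(e - t) * t ^ n < e * t - 1"
proof -
  have "t ^ n \<le> 1" using assms by (simp add: power_le_one)
  then have "(e - 1) * ((\<Sum>k<n. t ^ k) - 1) - 1 - t ^ n > 0" using assms by linarith
  then have "(1 - t) * ((e - 1) * ((\<Sum>k<n. t ^ k) - 1) - 1 - t ^ n) > 0" using assms by simp
  moreover have "(1 - t) * ((e - 1) * ((\<Sum>k<n. t ^ k) - 1) - 1 - t ^ n)
      = (e - 1) * ((1 - t) * (\<Sum>k<n. t ^ k)) - (e - 1) * (1 - t) - (1 - t) * (1 + t ^ n)"
    by (simp add: algebra_simps)
  also have "\<dots> = e * t - 1 - (e - t) * t ^ n"
    unfolding one_diff_power_eq[of t n, symmetric] by (simp add: algebra_simps)
  ultimately show ?thesis by simp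
qed

lemma sym_factor_root_free_pos:
  fixes e d :: real
  assumes e: "e > 1" and d: "d > 0"
  shows "\<forall>\<^sub>F n in sequentially. \<forall>t. 0 < \<bar>t\<bar> \<and> \<bar>t\<bar> < 1 \<and> d \<le> \<bar>t - 1/e\<bar> \<longrightarrow>
           \<bar>e - t\<bar> * \<bar>t\<bar> ^ n < \<bar>1 - e * t\<bar>"
proof -
  \<comment> \<open>Near \<open>t = 1\<close> both sides tend to \<open>e - 1\<close>; \<open>r\<close> is chosen so that \<open>(e - 1) (1/(1 - r) - 1) = e + 3 > 2\<close>.\<close>
  define r where "r = (e + 3) / (2 * e + 2)"
  have r: "0 < r" "r < 1" "(e - 1) * (1 / (1 - r) - 1) = e + 3" using e unfolding r_def by (auto simp: field_simps)
  have "(\<lambda>n. (e - 1) * ((\<Sum>k<n. r ^ k) - 1)) \<longlonglongrightarrow> (e - 1) * (1 / (1 - r) - 1)"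
    using geometric_sums[of r] r unfolding sums_def by (intro tendsto_intros) auto
  then have ev_sum: "\<forall>\<^sub>F n in sequentially. (e - 1) * ((\<Sum>k<n. r ^ k) - 1) > 2"
    using r(3) e by (intro order_tendstoD(1)) auto
  have ev_pow: "\<forall>\<^sub>F n in sequentially. r ^ n < d"
    using LIMSEQ_power_zero[of r] r d by (intro order_tendstoD(2)) auto
  show ?thesis using ev_sum ev_pow eventually_ge_at_top[of 1]
  proof eventually_elim
    case (elim n)
    show ?case
    proof (intro allI impI, elim conjE)
      fix t assume t: "0 < \<bar>t\<bar>" "\<bar>t\<bar> < 1" and td: "d \<le> \<bar>t - 1/e\<bar>"
      consider "t < 0" | "0 < t" "t \<le> r" | "r < t" using t by linarith
      then show "\<bar>e - t\<bar> * \<bar>t\<bar> ^ n < \<bar>1 - e * t\<bar>"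
      proof cases
        case 1
        have "\<bar>t\<bar> ^ n \<le> \<bar>t\<bar>" using power_decreasing[of 1 n "\<bar>t\<bar>"] elim(3) t by simp
        then have "\<bar>e - t\<bar> * \<bar>t\<bar> ^ n \<le> (e + \<bar>t\<bar>) * \<bar>t\<bar>" using 1 e by (intro mult_mono) auto
        also have "\<dots> < e * \<bar>t\<bar> + 1" using t mult_strict_mono[of "\<bar>t\<bar>" 1 "\<bar>t\<bar>" 1] by (simp add: algebra_simps)
        also have "\<dots> = \<bar>1 - e * t\<bar>" using 1 e mult_pos_neg[of e t] by (simp add: abs_if algebra_simps)
        finally show ?thesis .
      next
        case 2
        have "\<bar>e - t\<bar> * \<bar>t\<bar> ^ n \<le> e * r ^ n" using 2 e t by (intro mult_mono power_mono) auto
        also have "\<dots> < e * d" using elim(2) e by simp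
        also have "\<dots> \<le> e * \<bar>t - 1/e\<bar>" using td e by simp
        also have "\<dots> = \<bar>e * (t - 1/e)\<bar>" using e by (simp add: abs_mult)
        also have "\<dots> = \<bar>1 - e * t\<bar>" using e by (simp add: right_diff_distrib abs_minus_commute)
        finally show ?thesis .
      next
        case 3
        have "(\<Sum>k<n. r ^ k) \<le> (\<Sum>k<n. t ^ k)" using 3 r by (intro sum_mono power_mono) auto
        then have "(e - 1) * ((\<Sum>k<n. r ^ k) - 1) \<le> (e - 1) * ((\<Sum>k<n. t ^ k) - 1)"
          using e by (intro mult_left_mono) auto
        then have "(e - 1) * ((\<Sum>k<n. t ^ k) - 1) > 2" using elim(1) by linarith
        then have "(e - t) * t ^ n < e * t - 1" using power_mul_lt_of_geometric_sum e 3 r t by simp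
        then show ?thesis using 3 r t e by simp
      qed
    qed
  qed
qed

lemma sym_factor_root_free:
  fixes e d :: real
  assumes e: "\<bar>e\<bar> > 1" and d: "d > 0"
  shows "\<forall>\<^sub>F n in sequentially. \<forall>t. 0 < \<bar>t\<bar> \<and> \<bar>t\<bar> < 1 \<and> d \<le> \<bar>t - 1/e\<bar> \<longrightarrow>
           \<bar>e - t\<bar> * \<bar>t\<bar> ^ n < \<bar>1 - e * t\<bar>"
proof (cases "e > 0")
  case True
  then show ?thesis using sym_factor_root_free_pos[OF _ d] e by simp
next
  case False
  then have "-e > 1" using e by simp
  from sym_factor_root_free_pos[OF this d] show ?thesis
  proof eventually_elim
    case (elim n)
    show ?case
    proof (intro allI impI)
      fix t assume "0 < \<bar>t\<bar> \<and> \<bar>t\<bar> < 1 \<and> d \<le> \<bar>t - 1/e\<bar>"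
      moreover have "\<bar>-t - 1/(-e)\<bar> = \<bar>t - 1/e\<bar>" by (simp add: abs_minus_commute)
      ultimately show "\<bar>e - t\<bar> * \<bar>t\<bar> ^ n < \<bar>1 - e * t\<bar>"
        using elim[rule_format, of "-t"] by (simp add: abs_minus_commute)
    qed
  qed
qed

lemma sym_roots_near_inverse:
  fixes e d :: real
  assumes e: "\<bar>e\<bar> > 1" and d: "d > 0"
  shows "\<forall>\<^sub>F n in sequentially. \<forall>\<sigma> t. \<bar>\<sigma>\<bar> = 1 \<and> 0 < \<bar>t\<bar> \<and> \<bar>t\<bar> < 1 \<and> sym_factor n e \<sigma> t = 0
           \<longrightarrow> \<bar>t - 1/e\<bar> < d"
  using sym_factor_root_free[OF e d]
proof eventually_elim
  case (elim n)
  show ?case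
  proof (intro allI impI, elim conjE)
    fix \<sigma> t assume "\<bar>\<sigma>\<bar> = 1" "0 < \<bar>t\<bar>" "\<bar>t\<bar> < 1" "sym_factor n e \<sigma> t = 0"
    then have "\<bar>1 - e * t\<bar> = \<bar>e - t\<bar> * \<bar>t\<bar> ^ n" by (simp add: sym_factor_def abs_mult power_abs)
    then show "\<bar>t - 1/e\<bar> < d" using elim[rule_format, of t] \<open>0 < \<bar>t\<bar>\<close> \<open>\<bar>t\<bar> < 1\<close> by force
  qed
qed

definition root_window :: "real \<Rightarrow> real" where
  "root_window e = min (\<bar>1/e\<bar> / 2) ((1 - \<bar>1/e\<bar>) / 2)"

definition window_bound :: "real \<Rightarrow> real" where
  "window_bound e = (1 + \<bar>1/e\<bar>) / 2"

lemma root_window_pos: "\<bar>e\<bar> > 1 \<Longrightarrow> root_window e > 0"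
  by (simp add: root_window_def abs_divide divide_less_eq)

lemma window_bound_less_1: "\<bar>e\<bar> > 1 \<Longrightarrow> window_bound e < 1"
  by (simp add: window_bound_def abs_divide divide_less_eq)

lemma abs_in_root_window:
  assumes "\<bar>e\<bar> > 1" "\<bar>t - 1/e\<bar> \<le> root_window e"
  shows "0 < \<bar>t\<bar>" "\<bar>t\<bar> \<le> window_bound e" "\<bar>t\<bar> < 1"
proof -
  define u where "u = \<bar>1/e\<bar>"
  have u: "0 < u" "u < 1" using assms(1) unfolding u_def by (auto simp: abs_divide divide_less_eq)
  have tri: "\<bar>t\<bar> \<le> \<bar>t - 1/e\<bar> + u" "u \<le> \<bar>t\<bar> + \<bar>t - 1/e\<bar>"
    using abs_triangle_ineq[of "t - 1/e" "1/e"] abs_triangle_ineq[of "1/e - t" t]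
    unfolding u_def by (simp_all add: abs_minus_commute)
  have win: "\<bar>t - 1/e\<bar> \<le> u / 2" "\<bar>t - 1/e\<bar> \<le> (1 - u) / 2"
    using assms(2) unfolding root_window_def u_def by auto
  show "0 < \<bar>t\<bar>" using u tri win by linarith
  show "\<bar>t\<bar> \<le> window_bound e" using tri win unfolding window_bound_def u_def[symmetric] by argo
  then show "\<bar>t\<bar> < 1" using window_bound_less_1[OF assms(1)] by linarith
qed

lemma abs_inverse_le_window_bound: "\<bar>e\<bar> > 1 \<Longrightarrow> \<bar>1/e\<bar> \<le> window_bound e"
  using abs_in_root_window(2)[of e "1/e"] root_window_pos[of e] by simp

lemma sym_factor_root_near_inverse:
  assumes e: "e \<noteq> 0" and d: "d > 0"
    and small: "\<And>t. \<bar>t - 1/e\<bar> = d \<Longrightarrow> \<bar>\<sigma> * (e - t) * t ^ n\<bar> < \<bar>e\<bar> * d"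
  obtains t where "\<bar>t - 1/e\<bar> \<le> d" "sym_factor n e \<sigma> t = 0"
proof -
  define a where "a = 1/e - d"
  define b where "b = 1/e + d"
  have "sym_factor n e \<sigma> a = e * d - \<sigma> * (e - a) * a ^ n"
    "sym_factor n e \<sigma> b = - e * d - \<sigma> * (e - b) * b ^ n"
    using e unfolding sym_factor_def a_def b_def by (auto simp: algebra_simps)
  moreover have "\<bar>\<sigma> * (e - a) * a ^ n\<bar> < \<bar>e\<bar> * d" "\<bar>\<sigma> * (e - b) * b ^ n\<bar> < \<bar>e\<bar> * d"
    using small d unfolding a_def b_def by auto
  moreover have "a \<le> b" "continuous_on {a..b} (sym_factor n e \<sigma>)"
    using d unfolding a_def b_def sym_factor_def by (auto intro!: continuous_intros)
  ultimately obtain t where "a \<le> t" "t \<le> b" "sym_factor n e \<sigma> t = 0"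
    using IVT'[of "sym_factor n e \<sigma>" a 0 b] IVT2'[of "sym_factor n e \<sigma>" b 0 a] e
    by (cases "e > 0") (force simp: abs_less_iff)+
  moreover have "\<bar>t - 1/e\<bar> \<le> d" using \<open>a \<le> t\<close> \<open>t \<le> b\<close> unfolding a_def b_def by (simp add: abs_le_iff)
  ultimately show ?thesis using that by blast
qed

lemma exists_sym_root:
  assumes e: "\<bar>e\<bar> > 1"
  shows "\<forall>\<^sub>F n in sequentially. \<forall>\<sigma>. \<bar>\<sigma>\<bar> = 1 \<longrightarrow> (\<exists>t. \<bar>t - 1/e\<bar> < root_window e \<and> sym_factor n e \<sigma> t = 0)"
proof -
  define r where "r = window_bound e"
  define d where "d = root_window e / 2"
  have r: "0 \<le> r" "r < 1" using window_bound_less_1[OF e] unfolding r_def window_bound_def by auto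
  have d: "0 < d" "d < root_window e" using root_window_pos[OF e] unfolding d_def by auto
  have "(\<lambda>n. (\<bar>e\<bar> + 1) * r ^ n) \<longlonglongrightarrow> (\<bar>e\<bar> + 1) * 0"
    using r by (intro tendsto_mult tendsto_const LIMSEQ_power_zero) simp
  moreover have "\<bar>e\<bar> * d > 0" using d e by simp
  ultimately have "\<forall>\<^sub>F n in sequentially. (\<bar>e\<bar> + 1) * r ^ n < \<bar>e\<bar> * d"
    by (intro order_tendstoD(2)) auto
  then show ?thesis
  proof eventually_elim
    case (elim n)
    show ?case
    proof (intro allI impI)
      fix \<sigma> :: real assume \<sigma>: "\<bar>\<sigma>\<bar> = 1"
      have "\<bar>\<sigma> * (e - t) * t ^ n\<bar> < \<bar>e\<bar> * d" if "\<bar>t - 1/e\<bar> = d" for t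
      proof -
        have "\<bar>t\<bar> \<le> r" "\<bar>t\<bar> < 1" using abs_in_root_window[OF e, of t] that d unfolding r_def by auto
        then have "\<bar>\<sigma> * (e - t) * t ^ n\<bar> \<le> (\<bar>e\<bar> + 1) * r ^ n"
          using \<sigma> by (auto simp: abs_mult power_abs intro!: mult_mono power_mono)
        then show ?thesis using elim by simp
      qed
      then obtain t where "\<bar>t - 1/e\<bar> \<le> d" "sym_factor n e \<sigma> t = 0"
        using sym_factor_root_near_inverse[of e d] e d by force
      then show "\<exists>t. \<bar>t - 1/e\<bar> < root_window e \<and> sym_factor n e \<sigma> t = 0" using d by force
    qed
  qed
qed

lemma abs_power_diff_le:
  fixes a b r :: real
  assumes "\<bar>a\<bar> \<le> r" "\<bar>b\<bar> \<le> r"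
  shows "\<bar>a ^ n - b ^ n\<bar> \<le> real n * r ^ (n - 1) * \<bar>a - b\<bar>"
proof (induction n)
  case (Suc n)
  have "\<bar>a ^ Suc n - b ^ Suc n\<bar> = \<bar>a * (a ^ n - b ^ n) + b ^ n * (a - b)\<bar>"
    by (simp add: algebra_simps)
  also have "\<dots> \<le> \<bar>a\<bar> * \<bar>a ^ n - b ^ n\<bar> + \<bar>b\<bar> ^ n * \<bar>a - b\<bar>"
    by (metis abs_mult abs_triangle_ineq power_abs)
  also have "\<dots> \<le> r * (real n * r ^ (n - 1) * \<bar>a - b\<bar>) + r ^ n * \<bar>a - b\<bar>"
    using assms by (intro add_mono mult_mono Suc.IH power_mono) auto
  also have "\<dots> = real (Suc n) * r ^ n * \<bar>a - b\<bar>"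
    by (cases n) (auto simp: algebra_simps)
  finally show ?case by simp
qed simp

lemma unique_sym_root:
  assumes e: "\<bar>e\<bar> > 1"
  shows "\<forall>\<^sub>F n in sequentially. \<forall>\<sigma> t1 t2. \<bar>\<sigma>\<bar> = 1 \<and> \<bar>t1 - 1/e\<bar> \<le> root_window e \<and> \<bar>t2 - 1/e\<bar> \<le> root_window e
      \<and> sym_factor n e \<sigma> t1 = 0 \<and> sym_factor n e \<sigma> t2 = 0 \<longrightarrow> t1 = t2"
proof -
  define r where "r = window_bound e"
  have r: "0 < r" "r < 1"
    using window_bound_less_1[OF e] unfolding r_def window_bound_def by (auto intro: add_pos_nonneg)
  \<comment> \<open>Subtracting the equations for two roots gives \<open>\<bar>e\<bar> \<bar>t1 - t2\<bar> \<le> K n \<bar>t1 - t2\<bar>\<close>.\<close>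
  define K where "K n = \<bar>e\<bar> * (real n * r ^ (n - 1)) + real (Suc n) * r ^ n" for n
  have "(\<lambda>n. real n * r ^ n) \<longlonglongrightarrow> 0" using powser_times_n_limit_0[of r] r by simp
  then have "(\<lambda>n. \<bar>e\<bar> * (real n * r ^ n / r) + (real n * r ^ n + r ^ n)) \<longlonglongrightarrow> \<bar>e\<bar> * (0 / r) + (0 + 0)"
    by (intro tendsto_intros LIMSEQ_power_zero) (use r in auto)
  moreover have "K = (\<lambda>n. \<bar>e\<bar> * (real n * r ^ n / r) + (real n * r ^ n + r ^ n))"
    using r unfolding K_def by (intro ext, case_tac n) (auto simp: field_simps)
  ultimately have "K \<longlonglongrightarrow> 0" by simp
  moreover have "0 < \<bar>e\<bar>" using e by simp
  ultimately have "\<forall>\<^sub>F n in sequentially. K n < \<bar>e\<bar>" by (rule order_tendstoD(2))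
  then show ?thesis
  proof eventually_elim
    case (elim n)
    show ?case
    proof (intro allI impI, elim conjE)
      fix \<sigma> t1 t2 assume \<sigma>: "\<bar>\<sigma>\<bar> = 1" and w: "\<bar>t1 - 1/e\<bar> \<le> root_window e" "\<bar>t2 - 1/e\<bar> \<le> root_window e"
        and roots: "sym_factor n e \<sigma> t1 = 0" "sym_factor n e \<sigma> t2 = 0"
      have t: "\<bar>t1\<bar> \<le> r" "\<bar>t2\<bar> \<le> r" using abs_in_root_window[OF e] w unfolding r_def by auto
      have "e * (t1 - t2) = - \<sigma> * (e * (t1 ^ n - t2 ^ n) - (t1 ^ Suc n - t2 ^ Suc n))"
        using roots unfolding sym_factor_def by (simp add: algebra_simps)
      then have "\<bar>e\<bar> * \<bar>t1 - t2\<bar> = \<bar>e * (t1 ^ n - t2 ^ n) - (t1 ^ Suc n - t2 ^ Suc n)\<bar>"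
        using \<sigma> by (metis abs_minus_cancel abs_mult mult_1)
      also have "\<dots> \<le> \<bar>e\<bar> * \<bar>t1 ^ n - t2 ^ n\<bar> + \<bar>t1 ^ Suc n - t2 ^ Suc n\<bar>"
        by (metis abs_mult abs_triangle_ineq4)
      also have "\<dots> \<le> \<bar>e\<bar> * (real n * r ^ (n - 1) * \<bar>t1 - t2\<bar>) + real (Suc n) * r ^ (Suc n - 1) * \<bar>t1 - t2\<bar>"
        by (intro add_mono mult_left_mono abs_power_diff_le t) auto
      also have "\<dots> = K n * \<bar>t1 - t2\<bar>" unfolding K_def by (simp add: algebra_simps)
      finally have le: "\<bar>e\<bar> * \<bar>t1 - t2\<bar> \<le> K n * \<bar>t1 - t2\<bar>" .
      show "t1 = t2"
      proof (rule ccontr)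
        assume "t1 \<noteq> t2"
        then have "\<bar>e\<bar> \<le> K n" using le by simp
        then show False using elim by simp
      qed
    qed
  qed
qed

section \<open>Eigenvectors and their projections\<close>

lemma eigvec_at_sym_root:
  assumes n: "n \<ge> 2" and t: "0 < \<bar>t\<bar>" "\<bar>t\<bar> < 1" and root: "sym_factor n e \<sigma> t = 0"
    and ev: "is_eigvec n (T n e e) (t + 1/t) z"
  obtains c where "\<forall>i<n. z i = c * (t ^ i + \<sigma> * t ^ (n - 1 - i))"
proof -
  have "t\<^sup>2 \<noteq> 1" using t by (simp add: abs_square_less_1 less_imp_neq)
  have "z i = (z 0 * (t * (e - t) / (1 - t\<^sup>2))) * (t ^ i + \<sigma> * t ^ (n - 1 - i))" if "i < n" for i
  proof -
    have "z i = z 0 * ev_seq e (t + 1/t) i" using eigvec_eq_ev_seq(1)[OF n ev] that by blast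
    then show ?thesis using ev_seq_at_sym_root[of t n e \<sigma> i] \<open>t\<^sup>2 \<noteq> 1\<close> t root that by simp
  qed
  then show ?thesis using that by blast
qed

lemma flip_sym_vector:
  assumes "\<forall>i<n. z i = c * (t ^ i + \<sigma> * t ^ (n - 1 - i))" "\<sigma> * \<sigma> = 1" "i < n"
  shows "flip n z i = \<sigma> * z i"
proof -
  have "flip n z i = c * (t ^ (n - 1 - i) + \<sigma> * t ^ i)"
    unfolding flip_def using assms(1,3) by (simp add: diff_diff_cancel)
  also have "\<dots> = \<sigma> * (c * (t ^ i + \<sigma> * t ^ (n - 1 - i)))" using assms(2) by (simp add: algebra_simps)
  finally show ?thesis using assms(1,3) by simp
qed

lemma proj_sq_dist_le:
  assumes "(\<Sum>i<n. u i * u i) > 0"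
  shows "(\<Sum>i<n. (x i - proj n u x i)\<^sup>2) \<le> (\<Sum>i<n. (x i - a * u i)\<^sup>2)"
proof -
  define A where "A = (\<Sum>i<n. x i * u i)"
  define B where "B = (\<Sum>i<n. u i * u i)"
  define b where "b = A / B"
  have proj: "proj n u x i = b * u i" for i unfolding proj_def b_def A_def B_def by simp
  have expand: "(\<Sum>i<n. (x i - c * u i)\<^sup>2) = (\<Sum>i<n. x i * x i) - 2 * c * A + c\<^sup>2 * B" for c
    unfolding A_def B_def
    by (simp add: power2_eq_square algebra_simps sum.distrib sum_subtractf sum_distrib_left)
  have "b * B = A" unfolding b_def using assms B_def by simp
  then have "(\<Sum>i<n. (x i - a * u i)\<^sup>2) - (\<Sum>i<n. (x i - b * u i)\<^sup>2) = B * (a - b)\<^sup>2"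
    unfolding expand by (simp add: power2_eq_square algebra_simps flip: \<open>b * B = A\<close>)
  moreover have "B * (a - b)\<^sup>2 \<ge> 0" using assms B_def by simp
  ultimately show ?thesis unfolding proj by linarith
qed

lemma sum_sq_power_diff_le:
  fixes r s t :: real
  assumes r: "r < 1" and t: "\<bar>t\<bar> \<le> r" and s: "\<bar>s\<bar> \<le> r"
  shows "(\<Sum>i<n. (t ^ i - s ^ i)\<^sup>2) \<le> 2 / (1 - r)\<^sup>2 * \<bar>t - s\<bar>"
proof -
  have r0: "0 \<le> r" using t by linarith
  have geom: "(\<Sum>i<m. r ^ i) \<le> 1 / (1 - r)" for m
  proof -
    have "(\<Sum>i<m. r ^ i) = (1 - r ^ m) / (1 - r)" using r by (simp add: sum_gp_strict)
    also have "\<dots> \<le> 1 / (1 - r)" using r r0 by (intro divide_right_mono) auto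
    finally show ?thesis .
  qed
  have "(t ^ i - s ^ i)\<^sup>2 \<le> (\<bar>t - s\<bar> / (1 - r)) * (2 * r ^ i)" for i
  proof -
    have "real i * r ^ (i - 1) = (\<Sum>k<i. r ^ (i - 1))" by simp
    also have "\<dots> \<le> (\<Sum>k<i. r ^ k)" using r r0 by (intro sum_mono power_decreasing) auto
    finally have "real i * r ^ (i - 1) \<le> 1 / (1 - r)" using geom[of i] by linarith
    then have "\<bar>t ^ i - s ^ i\<bar> \<le> \<bar>t - s\<bar> / (1 - r)"
      using abs_power_diff_le[OF t s, of i] mult_right_mono[of _ _ "\<bar>t - s\<bar>"] by fastforce
    moreover have "\<bar>t ^ i - s ^ i\<bar> \<le> 2 * r ^ i"
      using abs_triangle_ineq4[of "t ^ i" "s ^ i"] power_mono[OF t, of i] power_mono[OF s, of i]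
      by (simp add: power_abs)
    ultimately have "\<bar>t ^ i - s ^ i\<bar> * \<bar>t ^ i - s ^ i\<bar> \<le> (\<bar>t - s\<bar> / (1 - r)) * (2 * r ^ i)"
      by (intro mult_mono) auto
    then show ?thesis by (simp add: power2_eq_square)
  qed
  then have "(\<Sum>i<n. (t ^ i - s ^ i)\<^sup>2) \<le> (\<bar>t - s\<bar> / (1 - r)) * 2 * (\<Sum>i<n. r ^ i)"
    by (simp add: sum_mono sum_distrib_left mult.assoc)
  also have "\<dots> \<le> (\<bar>t - s\<bar> / (1 - r)) * 2 * (1 / (1 - r))"
    using r by (intro mult_left_mono geom) auto
  also have "\<dots> = 2 / (1 - r)\<^sup>2 * \<bar>t - s\<bar>" by (simp add: power2_eq_square)
  finally show ?thesis .
qed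

lemma sum_sq_sym_diff_le:
  fixes s t \<sigma> :: real
  assumes "\<bar>\<sigma>\<bar> = 1"
  shows "(\<Sum>i<n. ((t ^ i + \<sigma> * t ^ (n - 1 - i)) - (s ^ i + \<sigma> * s ^ (n - 1 - i)))\<^sup>2)
    \<le> 4 * (\<Sum>i<n. (t ^ i - s ^ i)\<^sup>2)"
proof -
  have "(\<Sum>i<n. ((t ^ i + \<sigma> * t ^ (n - 1 - i)) - (s ^ i + \<sigma> * s ^ (n - 1 - i)))\<^sup>2)
      \<le> (\<Sum>i<n. 2 * (t ^ i - s ^ i)\<^sup>2 + 2 * (t ^ (n - Suc i) - s ^ (n - Suc i))\<^sup>2)"
  proof (intro sum_mono)
    fix i
    have sq_sum: "(p + q)\<^sup>2 \<le> 2 * p\<^sup>2 + 2 * q\<^sup>2" for p q :: real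
      using sum_squares_ge_zero[of "p - q" 0] by (simp add: power2_eq_square algebra_simps)
    have "\<sigma> * \<sigma> = 1" using assms by (metis abs_mult_self_eq mult_1)
    then have "(\<sigma> * (t ^ (n - Suc i) - s ^ (n - Suc i)))\<^sup>2 = (t ^ (n - Suc i) - s ^ (n - Suc i))\<^sup>2"
      by (simp add: power_mult_distrib power2_eq_square)
    moreover have eq: "(t ^ i + \<sigma> * t ^ (n - 1 - i)) - (s ^ i + \<sigma> * s ^ (n - 1 - i))
        = (t ^ i - s ^ i) + \<sigma> * (t ^ (n - Suc i) - s ^ (n - Suc i))"
      by (simp add: algebra_simps)
    ultimately show "((t ^ i + \<sigma> * t ^ (n - 1 - i)) - (s ^ i + \<sigma> * s ^ (n - 1 - i)))\<^sup>2
        \<le> 2 * (t ^ i - s ^ i)\<^sup>2 + 2 * (t ^ (n - Suc i) - s ^ (n - Suc i))\<^sup>2"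
      using sq_sum[of "t ^ i - s ^ i" "\<sigma> * (t ^ (n - Suc i) - s ^ (n - Suc i))"] unfolding eq by linarith
  qed
  also have "\<dots> = 2 * (\<Sum>i<n. (t ^ i - s ^ i)\<^sup>2) + 2 * (\<Sum>i<n. (t ^ (n - Suc i) - s ^ (n - Suc i))\<^sup>2)"
    by (simp add: sum.distrib sum_distrib_left)
  also have "(\<Sum>i<n. (t ^ (n - Suc i) - s ^ (n - Suc i))\<^sup>2) = (\<Sum>i<n. (t ^ i - s ^ i)\<^sup>2)"
    by (rule sum.nat_diff_reindex)
  finally show ?thesis by simp
qed

lemma proj_sym_error_le:
  fixes x :: "nat \<Rightarrow> real"
  assumes n: "n \<ge> 2" and r: "r < 1" and t: "\<bar>t\<bar> \<le> r" and s: "\<bar>s\<bar> \<le> r" and \<sigma>: "\<bar>\<sigma>\<bar> = 1"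
    and x: "\<forall>i<n. x i = c * (t ^ i + \<sigma> * t ^ (n - 1 - i))" and norm: "(\<Sum>i<n. (x i)\<^sup>2) = 1"
  shows "(\<Sum>i<n. (x i - proj n (\<lambda>i. s ^ i + \<sigma> * s ^ (n - 1 - i)) x i)\<^sup>2) \<le> 8 / (1 - r) ^ 4 * \<bar>t - s\<bar>"
proof -
  define u where "u i = s ^ i + \<sigma> * s ^ (n - 1 - i)" for i
  define U where "U i = t ^ i + \<sigma> * t ^ (n - 1 - i)" for i
  have "1 - r > 0" using r by simp
  have first_entry: "1 - r \<le> \<bar>1 + \<sigma> * y ^ (n - 1)\<bar>" if "\<bar>y\<bar> \<le> r" for y
  proof -
    have "\<bar>y\<bar> ^ (n - 1) \<le> \<bar>y\<bar> ^ 1" using that r n by (intro power_decreasing) auto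
    then have "\<bar>\<sigma> * y ^ (n - 1)\<bar> \<le> r" using that \<sigma> by (simp add: abs_mult power_abs)
    then show ?thesis by linarith
  qed
  have sq_le_sum: "(f 0)\<^sup>2 \<le> (\<Sum>i<n. (f i)\<^sup>2)" for f :: "nat \<Rightarrow> real"
    using n by (intro member_le_sum) auto
  have "(1 - r)\<^sup>2 \<le> (u 0)\<^sup>2" "(1 - r)\<^sup>2 \<le> (U 0)\<^sup>2"
    using first_entry[OF s] first_entry[OF t] \<open>1 - r > 0\<close> unfolding u_def U_def
    by (auto simp: abs_le_square_iff[symmetric])
  moreover have "(1 - r)\<^sup>2 > 0" using \<open>1 - r > 0\<close> by simp
  ultimately have "(\<Sum>i<n. (u i)\<^sup>2) > 0" using sq_le_sum[of u] by linarith
  then have "(\<Sum>i<n. u i * u i) > 0" by (simp add: power2_eq_square)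
  then have "(\<Sum>i<n. (x i - proj n u x i)\<^sup>2) \<le> (\<Sum>i<n. (x i - c * u i)\<^sup>2)"
    by (rule proj_sq_dist_le)
  also have "\<dots> = c\<^sup>2 * (\<Sum>i<n. (U i - u i)\<^sup>2)"
    unfolding sum_distrib_left using x by (intro sum.cong refl) (simp add: U_def power2_eq_square algebra_simps)
  also have "\<dots> \<le> c\<^sup>2 * (4 * (2 / (1 - r)\<^sup>2 * \<bar>t - s\<bar>))"
    using sum_sq_sym_diff_le[OF \<sigma>, where n=n and t=t and s=s] sum_sq_power_diff_le[OF r t s, of n]
    unfolding U_def u_def by (intro mult_left_mono) auto
  also have "\<dots> \<le> 1 / (1 - r)\<^sup>2 * (4 * (2 / (1 - r)\<^sup>2 * \<bar>t - s\<bar>))"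
  proof (intro mult_right_mono)
    have "c\<^sup>2 * (U 0)\<^sup>2 \<le> c\<^sup>2 * (\<Sum>i<n. (U i)\<^sup>2)" by (intro mult_left_mono sq_le_sum) auto
    also have "\<dots> = 1"
      using x norm unfolding sum_distrib_left U_def by (simp add: power_mult_distrib)
    finally have "c\<^sup>2 * (1 - r)\<^sup>2 \<le> 1"
      using mult_left_mono[OF \<open>(1 - r)\<^sup>2 \<le> (U 0)\<^sup>2\<close>, of "c\<^sup>2"] by simp
    then show "c\<^sup>2 \<le> 1 / (1 - r)\<^sup>2" using \<open>1 - r > 0\<close> by (simp add: le_divide_eq)
  qed simp
  also have "\<dots> = 8 / (1 - r) ^ 4 * \<bar>t - s\<bar>" by (simp add: power2_eq_square power4_eq_xxxx)
  finally show ?thesis unfolding u_def .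
qed

text \<open>\<open>near_root\<close> is determined only for large \<open>n\<close> (\<open>exists_sym_root\<close>); otherwise
  \<open>SOME\<close> returns an arbitrary value.\<close>

definition near_root :: "real \<Rightarrow> real \<Rightarrow> nat \<Rightarrow> real" where
  "near_root e \<sigma> n = (SOME t. \<bar>t - 1/e\<bar> < root_window e \<and> sym_factor n e \<sigma> t = 0)"

lemma near_root_eventually:
  assumes "\<bar>e\<bar> > 1"
  shows "\<forall>\<^sub>F n in sequentially. \<forall>\<sigma>. \<bar>\<sigma>\<bar> = 1 \<longrightarrow>
           \<bar>near_root e \<sigma> n - 1/e\<bar> < root_window e \<and> sym_factor n e \<sigma> (near_root e \<sigma> n) = 0"
  using exists_sym_root[OF assms]
proof eventually_elim
  case (elim n)
  show ?case
  proof (intro allI impI)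
    fix \<sigma> :: real assume "\<bar>\<sigma>\<bar> = 1"
    then have "\<exists>t. \<bar>t - 1/e\<bar> < root_window e \<and> sym_factor n e \<sigma> t = 0" using elim by blast
    then show "\<bar>near_root e \<sigma> n - 1/e\<bar> < root_window e \<and> sym_factor n e \<sigma> (near_root e \<sigma> n) = 0"
      unfolding near_root_def by (rule someI_ex)
  qed
qed

lemma near_root_tendsto:
  assumes e: "\<bar>e\<bar> > 1" and \<sigma>: "\<bar>\<sigma>\<bar> = 1"
  shows "near_root e \<sigma> \<longlonglongrightarrow> 1/e"
proof (rule tendstoI)
  fix d :: real assume "d > 0"
  show "\<forall>\<^sub>F n in sequentially. dist (near_root e \<sigma> n) (1/e) < d"
    using near_root_eventually[OF e] sym_roots_near_inverse[OF e \<open>d > 0\<close>]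
  proof eventually_elim
    case (elim n)
    then show ?case using abs_in_root_window[OF e, of "near_root e \<sigma> n"] \<sigma> by (auto simp: dist_real_def)
  qed
qed

definition near_eigval :: "real \<Rightarrow> real \<Rightarrow> nat \<Rightarrow> real" where
  "near_eigval e \<sigma> n = near_root e \<sigma> n + 1 / near_root e \<sigma> n"

lemma near_eigval_tendsto:
  assumes "\<bar>e\<bar> > 1" "\<bar>\<sigma>\<bar> = 1"
  shows "near_eigval e \<sigma> \<longlonglongrightarrow> e + 1/e"
proof -
  have "(\<lambda>n. near_root e \<sigma> n + 1 / near_root e \<sigma> n) \<longlonglongrightarrow> 1/e + 1 / (1/e)"
    using assms by (intro tendsto_intros near_root_tendsto) auto
  then show ?thesis unfolding near_eigval_def[abs_def] by (simp add: add.commute)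
qed

lemma near_root_bounds:
  assumes "\<bar>e\<bar> > 1"
  shows "\<forall>\<^sub>F n in sequentially. n \<ge> 2 \<and> (\<forall>\<sigma>. \<bar>\<sigma>\<bar> = 1 \<longrightarrow> 0 < \<bar>near_root e \<sigma> n\<bar> \<and>
           \<bar>near_root e \<sigma> n\<bar> \<le> window_bound e \<and> sym_factor n e \<sigma> (near_root e \<sigma> n) = 0)"
  using near_root_eventually[OF assms] eventually_ge_at_top[of 2]
  by eventually_elim (use abs_in_root_window[OF assms] in \<open>auto simp: less_imp_le\<close>)

lemma near_eigvals_distinct:
  assumes e: "\<bar>e\<bar> > 1"
  shows "\<forall>\<^sub>F n in sequentially. near_eigval e 1 n \<noteq> near_eigval e (-1) n"
  using near_root_bounds[OF e]
proof eventually_elim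
  case (elim n)
  have roots: "0 < \<bar>near_root e \<sigma> n\<bar>" "\<bar>near_root e \<sigma> n\<bar> < 1" "sym_factor n e \<sigma> (near_root e \<sigma> n) = 0"
    if "\<bar>\<sigma>\<bar> = 1" for \<sigma>
    using elim that window_bound_less_1[OF e] by fastforce+
  show ?case
  proof
    assume "near_eigval e 1 n = near_eigval e (-1) n"
    then have "near_root e 1 n = near_root e (-1) n"
      using roots[of 1] roots[of "-1"] add_inverse_inj unfolding near_eigval_def by simp
    then have "sym_factor n e 1 (near_root e 1 n) - sym_factor n e (-1) (near_root e 1 n) = 0"
      using roots[of 1] roots[of "-1"] by simp
    then have "(e - near_root e 1 n) * near_root e 1 n ^ n = 0" unfolding sym_factor_def by auto
    then show False using roots[of 1] e by auto
  qed
qed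

lemma outliers_eq_near_eigvals:
  assumes e: "\<bar>e\<bar> > 1"
  shows "\<forall>\<^sub>F n in sequentially. outliers n (T n e e) = {near_eigval e 1 n, near_eigval e (-1) n}"
  using near_root_bounds[OF e] near_root_eventually[OF e] unique_sym_root[OF e]
    sym_roots_near_inverse[OF e root_window_pos[OF e]]
proof eventually_elim
  case (elim n)
  have n: "n \<ge> 2" using elim(1) by simp
  have roots: "0 < \<bar>near_root e \<sigma> n\<bar>" "\<bar>near_root e \<sigma> n\<bar> < 1" "sym_factor n e \<sigma> (near_root e \<sigma> n) = 0"
    if "\<bar>\<sigma>\<bar> = 1" for \<sigma>
    using elim(1) that window_bound_less_1[OF e] by fastforce+
  show ?case
  proof (intro equalityI subsetI)
    fix c assume "c \<in> outliers n (T n e e)"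
    then have "ev_residual n e c = 0" "\<bar>c\<bar> > 2" unfolding outliers_def using is_eigval_T_iff[OF n] by auto
    then obtain t where t: "0 < \<bar>t\<bar>" "\<bar>t\<bar> < 1" "c = t + 1/t" "ev_residual n e (t + 1/t) = 0"
      using abs_gt_2_eq_add_inverse by metis
    then have "sym_factor n e 1 t * sym_factor n e (-1) t = 0"
      using ev_residual_joukowski[of t n e] n by simp
    then obtain \<sigma> where \<sigma>: "\<sigma> = 1 \<or> \<sigma> = -1" "sym_factor n e \<sigma> t = 0" by auto
    then have "\<bar>\<sigma>\<bar> = 1" by auto
    then have "\<bar>t - 1/e\<bar> < root_window e" using elim(4) t \<sigma>(2) by blast
    then have "t = near_root e \<sigma> n" using elim(2,3) \<sigma>(2) \<open>\<bar>\<sigma>\<bar> = 1\<close> by (meson less_imp_le)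
    then show "c \<in> {near_eigval e 1 n, near_eigval e (-1) n}" using \<sigma> t unfolding near_eigval_def by auto
  next
    fix c assume "c \<in> {near_eigval e 1 n, near_eigval e (-1) n}"
    then obtain \<sigma> where \<sigma>: "\<bar>\<sigma>\<bar> = 1" "c = near_eigval e \<sigma> n" by force
    then have "ev_residual n e c = 0"
      using ev_residual_eq_0_if_sym_root[OF _ \<sigma>(1) roots[OF \<sigma>(1)]] n \<sigma> unfolding near_eigval_def by simp
    moreover have "\<bar>c\<bar> > 2" using abs_add_inverse_gt_2 roots \<sigma> unfolding near_eigval_def by simp
    ultimately show "c \<in> outliers n (T n e e)" unfolding outliers_def using is_eigval_T_iff[OF n] by auto
  qed
qed

lemma near_eigvec_sym_form:
  assumes e: "\<bar>e\<bar> > 1" and \<sigma>: "\<bar>\<sigma>\<bar> = 1"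
    and z: "\<forall>\<^sub>F n in sequentially. is_eigvec n (T n e e) (near_eigval e \<sigma> n) (z n)"
  shows "\<forall>\<^sub>F n in sequentially. n \<ge> 2 \<and> \<bar>near_root e \<sigma> n\<bar> \<le> window_bound e \<and>
      (\<exists>c. \<forall>i<n. z n i = c * (near_root e \<sigma> n ^ i + \<sigma> * near_root e \<sigma> n ^ (n - 1 - i)))"
  using near_root_bounds[OF e] z
proof eventually_elim
  case (elim n)
  have n: "n \<ge> 2" using elim(1) by simp
  have "0 < \<bar>near_root e \<sigma> n\<bar> \<and> \<bar>near_root e \<sigma> n\<bar> \<le> window_bound e \<and> sym_factor n e \<sigma> (near_root e \<sigma> n) = 0"
    using elim(1) \<sigma> by simp
  then have t: "0 < \<bar>near_root e \<sigma> n\<bar>" "\<bar>near_root e \<sigma> n\<bar> \<le> window_bound e" "\<bar>near_root e \<sigma> n\<bar> < 1"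
    and root: "sym_factor n e \<sigma> (near_root e \<sigma> n) = 0" using window_bound_less_1[OF e] by auto
  have "is_eigvec n (T n e e) (near_root e \<sigma> n + 1 / near_root e \<sigma> n) (z n)"
    using elim unfolding near_eigval_def by blast
  then show ?case using eigvec_at_sym_root[OF n t(1,3) root] n t(2) by blast
qed

lemma near_eigvecs:
  assumes e: "\<bar>e\<bar> > 1" and \<sigma>: "\<bar>\<sigma>\<bar> = 1"
    and z: "\<forall>\<^sub>F n in sequentially. is_eigvec n (T n e e) (near_eigval e \<sigma> n) (z n) \<and> vnorm n (z n) = 1"
  shows "\<forall>\<^sub>F n in sequentially. \<forall>i<n. flip n (z n) i = \<sigma> * z n i"
    and "(\<lambda>n. vnorm n (vdiff n (z n) (proj n (\<lambda>i. vv e n i + \<sigma> * ww e n i) (z n)))) \<longlonglongrightarrow> 0"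
proof -
  define r where "r = window_bound e"
  define K where "K = 8 / (1 - r) ^ 4"
  have r: "r < 1" "\<bar>1/e\<bar> \<le> r"
    using window_bound_less_1[OF e] abs_inverse_le_window_bound[OF e] unfolding r_def by auto
  have \<sigma>\<sigma>: "\<sigma> * \<sigma> = 1" using \<sigma> by (metis abs_mult_self_eq mult_1)
  have sym: "\<forall>\<^sub>F n in sequentially. (n \<ge> 2 \<and> \<bar>near_root e \<sigma> n\<bar> \<le> r \<and>
      (\<exists>c. \<forall>i<n. z n i = c * (near_root e \<sigma> n ^ i + \<sigma> * near_root e \<sigma> n ^ (n - 1 - i)))) \<and> vnorm n (z n) = 1"
  proof -
    have "\<forall>\<^sub>F n in sequentially. is_eigvec n (T n e e) (near_eigval e \<sigma> n) (z n)"
      using z by (rule eventually_mono) simp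
    from near_eigvec_sym_form[OF e \<sigma> this] z show ?thesis
      unfolding r_def by eventually_elim blast
  qed
  then show "\<forall>\<^sub>F n in sequentially. \<forall>i<n. flip n (z n) i = \<sigma> * z n i"
    by eventually_elim (use flip_sym_vector \<sigma>\<sigma> in blast)
  have "\<forall>\<^sub>F n in sequentially. vnorm n (vdiff n (z n) (proj n (\<lambda>i. vv e n i + \<sigma> * ww e n i) (z n)))
      \<le> sqrt (K * \<bar>near_root e \<sigma> n - 1/e\<bar>)"
    using sym
  proof eventually_elim
    case (elim n)
    then obtain c where c: "\<forall>i<n. z n i = c * (near_root e \<sigma> n ^ i + \<sigma> * near_root e \<sigma> n ^ (n - 1 - i))"
      by blast
    have "(\<Sum>i<n. (z n i)\<^sup>2) = 1" using elim unfolding vnorm_def by simp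
    from proj_sym_error_le[of n r _ "1/e", OF _ r(1) _ r(2) \<sigma> c this]
    have "(\<Sum>i<n. (z n i - proj n (\<lambda>i. (1/e) ^ i + \<sigma> * (1/e) ^ (n - 1 - i)) (z n) i)\<^sup>2)
        \<le> K * \<bar>near_root e \<sigma> n - 1/e\<bar>"
      using elim unfolding K_def by blast
    moreover have "(\<lambda>i. vv e n i + \<sigma> * ww e n i) = (\<lambda>i. (1/e) ^ i + \<sigma> * (1/e) ^ (n - 1 - i))"
      by (simp add: vv_def ww_def flip_def)
    ultimately show ?case unfolding vnorm_def vdiff_def by (simp add: real_sqrt_le_mono)
  qed
  moreover have "(\<lambda>n. sqrt (K * \<bar>near_root e \<sigma> n - 1/e\<bar>)) \<longlonglongrightarrow> sqrt (K * \<bar>1/e - 1/e\<bar>)"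
    by (intro tendsto_intros near_root_tendsto e \<sigma>)
  moreover have "\<forall>\<^sub>F n in sequentially. 0 \<le> vnorm n (vdiff n (z n) (proj n (\<lambda>i. vv e n i + \<sigma> * ww e n i) (z n)))"
    unfolding vnorm_def by (intro always_eventually allI real_sqrt_ge_zero sum_nonneg) simp
  ultimately show "(\<lambda>n. vnorm n (vdiff n (z n) (proj n (\<lambda>i. vv e n i + \<sigma> * ww e n i) (z n)))) \<longlonglongrightarrow> 0"
    using tendsto_sandwich[OF _ _ tendsto_const] by simp
qed

lemma eigval_sequences:
  assumes e: "\<bar>e\<bar> > 1"
  obtains \<mu> \<nu> :: "nat \<Rightarrow> real" where
    "\<forall>n\<ge>2. \<mu> n \<noteq> \<nu> n \<and> is_eigval n (T n e e) (\<mu> n) \<and> is_eigval n (T n e e) (\<nu> n)"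
    "\<forall>\<^sub>F n in sequentially. \<mu> n = near_eigval e 1 n \<and> \<nu> n = near_eigval e (-1) n"
proof -
  obtain N where N: "\<And>n. n \<ge> N \<Longrightarrow> near_eigval e 1 n \<noteq> near_eigval e (-1) n
      \<and> outliers n (T n e e) = {near_eigval e 1 n, near_eigval e (-1) n}"
    using eventually_conj[OF near_eigvals_distinct[OF e] outliers_eq_near_eigvals[OF e]]
    unfolding eventually_sequentially by blast
  obtain l1 l2 where small:
    "\<And>n. n \<ge> 2 \<Longrightarrow> l1 n \<noteq> l2 n \<and> is_eigval n (T n e e) (l1 n) \<and> is_eigval n (T n e e) (l2 n)"
    using two_eigvals[OF e] by metis
  define \<mu> where "\<mu> n = (if n \<ge> N then near_eigval e 1 n else l1 n)" for n
  define \<nu> where "\<nu> n = (if n \<ge> N then near_eigval e (-1) n else l2 n)" for n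
  have "\<forall>n\<ge>2. \<mu> n \<noteq> \<nu> n \<and> is_eigval n (T n e e) (\<mu> n) \<and> is_eigval n (T n e e) (\<nu> n)"
    using N small unfolding \<mu>_def \<nu>_def outliers_def by auto
  moreover have "\<forall>\<^sub>F n in sequentially. \<mu> n = near_eigval e 1 n \<and> \<nu> n = near_eigval e (-1) n"
    using eventually_ge_at_top[of N] by eventually_elim (simp add: \<mu>_def \<nu>_def)
  ultimately show ?thesis using that by blast
qed

theorem theorem3p4:
  fixes \<epsilon> \<phi> :: real
  assumes "\<epsilon> = \<phi>" and "\<bar>\<epsilon>\<bar> > 1"
  shows "\<exists>\<mu> \<nu> :: nat \<Rightarrow> real.
     (\<forall>n\<ge>2. \<mu> n \<noteq> \<nu> n \<and> is_eigval n (T n \<epsilon> \<phi>) (\<mu> n) \<and> is_eigval n (T n \<epsilon> \<phi>) (\<nu> n))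
   \<and> \<mu> \<longlonglongrightarrow> \<epsilon> + 1 / \<epsilon> \<and> \<nu> \<longlonglongrightarrow> \<epsilon> + 1 / \<epsilon>
   \<and> (\<forall>\<^sub>F n in sequentially. outliers n (T n \<epsilon> \<phi>) = {\<mu> n, \<nu> n})
   \<and> (\<forall>x y :: nat \<Rightarrow> nat \<Rightarrow> real.
        (\<forall>n\<ge>2. is_eigvec n (T n \<epsilon> \<phi>) (\<mu> n) (x n) \<and> vnorm n (x n) = 1
              \<and> is_eigvec n (T n \<epsilon> \<phi>) (\<nu> n) (y n) \<and> vnorm n (y n) = 1) \<longrightarrow>
        (\<forall>\<^sub>F n in sequentially. (\<forall>i<n. flip n (x n) i = x n i \<and> flip n (y n) i = - y n i))
      \<and> (\<lambda>n. vnorm n (vdiff n (x n)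
               (proj n (\<lambda>i. vv \<epsilon> n i + ww \<epsilon> n i) (x n)))) \<longlonglongrightarrow> 0
      \<and> (\<lambda>n. vnorm n (vdiff n (y n)
               (proj n (\<lambda>i. vv \<epsilon> n i - ww \<epsilon> n i) (y n)))) \<longlonglongrightarrow> 0)"
proof -
  note e = assms(2)
  obtain \<mu> \<nu> where eig: "\<forall>n\<ge>2. \<mu> n \<noteq> \<nu> n \<and> is_eigval n (T n \<epsilon> \<epsilon>) (\<mu> n) \<and> is_eigval n (T n \<epsilon> \<epsilon>) (\<nu> n)"
    and near: "\<forall>\<^sub>F n in sequentially. \<mu> n = near_eigval \<epsilon> 1 n \<and> \<nu> n = near_eigval \<epsilon> (-1) n"
    using eigval_sequences[OF e] by blast
  have "\<mu> \<longlonglongrightarrow> \<epsilon> + 1 / \<epsilon>"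
    by (rule Lim_transform_eventually[OF near_eigval_tendsto[OF e, of 1]])
      (use near in \<open>auto elim: eventually_mono\<close>)
  moreover have "\<nu> \<longlonglongrightarrow> \<epsilon> + 1 / \<epsilon>"
    by (rule Lim_transform_eventually[OF near_eigval_tendsto[OF e, of "-1"]])
      (use near in \<open>auto elim: eventually_mono\<close>)
  moreover have "\<forall>\<^sub>F n in sequentially. outliers n (T n \<epsilon> \<epsilon>) = {\<mu> n, \<nu> n}"
    using outliers_eq_near_eigvals[OF e] near by eventually_elim simp
  moreover have "(\<forall>\<^sub>F n in sequentially. \<forall>i<n. flip n (x n) i = x n i \<and> flip n (y n) i = - y n i)
      \<and> (\<lambda>n. vnorm n (vdiff n (x n) (proj n (\<lambda>i. vv \<epsilon> n i + ww \<epsilon> n i) (x n)))) \<longlonglongrightarrow> 0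
      \<and> (\<lambda>n. vnorm n (vdiff n (y n) (proj n (\<lambda>i. vv \<epsilon> n i - ww \<epsilon> n i) (y n)))) \<longlonglongrightarrow> 0"
    if "\<forall>n\<ge>2. is_eigvec n (T n \<epsilon> \<epsilon>) (\<mu> n) (x n) \<and> vnorm n (x n) = 1
          \<and> is_eigvec n (T n \<epsilon> \<epsilon>) (\<nu> n) (y n) \<and> vnorm n (y n) = 1" for x y
  proof -
    have "\<forall>\<^sub>F n in sequentially. is_eigvec n (T n \<epsilon> \<epsilon>) (near_eigval \<epsilon> 1 n) (x n) \<and> vnorm n (x n) = 1"
      "\<forall>\<^sub>F n in sequentially. is_eigvec n (T n \<epsilon> \<epsilon>) (near_eigval \<epsilon> (-1) n) (y n) \<and> vnorm n (y n) = 1"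
      using near eventually_ge_at_top[of 2] by (eventually_elim, use that in auto)+
    from near_eigvecs[OF e _ this(1)] near_eigvecs[OF e _ this(2)] show ?thesis
      by (auto elim: eventually_elim2)
  qed
  ultimately show ?thesis unfolding \<open>\<epsilon> = \<phi>\<close>[symmetric] using eig by blast
qed

end
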